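(* In the standing setting below, assume in addition that $\rho$ satisfies $$\partial_t\rho+\frac1r\partial_r(r\rho v)=\frac{k_\rho\, w}{w+K_{w\rho}}\,f\Big(1-\frac{\rho}{\rho_m}\Big)-\lambda_\rho\rho\quad\text{in } R(t)<r<L,\ 0<t<T,$$ where $k_\rho>0$, $K_{w\rho}>0$, $\lambda_\rho>0$, $\rho_m>1$ are constants and $w\ge0$, $f\ge 0$ are given continuous functions on $\Omega_T$. If $\rho(r,0)<\rho_m$ for all $R_0\le r\le L$, then $\rho<\rho_m$ in $\Omega_T$.
   Context: Standing setting. Fix constants $L>0$, $0<R_0<L$, $\beta>0$, $T>0$. Let $R\in C^1([0,T))$ with $R(0)=R_0$ and $0<R(t)<L$, and set $\Omega_T=\{(r,t): R(t)\le r\le L,\ 0\le t<T\}$. Let $\rho\ge 0$ be a classical (continuously differentiable) function on $\Omega_T$ (the matrix density), and define the pressure $P(r,t)=P(\rho(r,t))$ where $P(\rho)=\beta(\rho-1)$ for $\rho\ge1$ and $P(\rho)=0$ for $\rho<1$. Let $v(r,t)$ be a classical function on $\Omega_T$ (twice continuously differentiable in $r$) satisfying $\frac1r\partial_r(r\,\partial_r v)-\frac{v}{r^2}=\partial_r P$ for $R(t)<r<L$, with $v(L,t)=0$, $\partial_r v(R(t),t)=P(R(t),t)$, and the free-boundary law $\dot R(t)=v(R(t),t)$. Define $Q(t)=\int_{R(t)}^L y\,P(y,t)\,dy$. *)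

theory Defs
  imports "HOL-Analysis.Analysis"
begin

definition pres :: "real \<Rightarrow> real \<Rightarrow> real" where
  "pres \<beta> x = (if x \<ge> 1 then \<beta> * (x - 1) else 0)"

definition Omega :: "(real \<Rightarrow> real) \<Rightarrow> real \<Rightarrow> real \<Rightarrow> (real \<times> real) set" where
  "Omega R L T = {(r, t). R t \<le> r \<and> r \<le> L \<and> 0 \<le> t \<and> t < T}"

end

theory Submission
  imports Defs
begin

text \<open>
  Suppose the density reaches the
  capacity \<open>\<rho>_m\<close> somewhere. By compactness there is a first time t1 at which this happens, and
  at that time we take a point rs where \<open>\<rho>(\<cdot>, t1)\<close> is maximal, with value M \<ge> \<rho>_m. Since the
  density was below \<open>\<rho>_m \<le> M\<close> at all earlier times, its material derivative
  \<open>\<rho>_t + v \<rho>_r\<close> at (rs, t1) is nonnegative; at the moving boundary this uses the free boundary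
  law \<open>R' = v\<close> and difference quotients along paths inside the domain. The elliptic equation
  for v says that the divergence \<open>v/r + v_r\<close> equals the pressure plus a constant, and together
  with the boundary conditions this makes the divergence positive at the pressure maximum.
  Writing the transport term as \<open>(\<rho>_t + v \<rho>_r) + \<rho> (v/r + v_r)\<close>, the left side of the
  density equation is then positive at (rs, t1), whereas the right side is negative because
  \<open>\<rho> \<ge> \<rho>_m\<close>: a contradiction.
\<close>

lemma Omega_iff: "(r, t) \<in> Omega R L T \<longleftrightarrow> R t \<le> r \<and> r \<le> L \<and> 0 \<le> t \<and> t < T"
  by (simp add: Omega_def)

lemma mvt_real_within:
  fixes f f' :: "real \<Rightarrow> real"
  assumes "a \<le> b" and "\<And>x. x \<in> {a..b} \<Longrightarrow> (f has_real_derivative f' x) (at x within {a..b})"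
  shows "\<exists>x\<in>{a..b}. f b - f a = f' x * (b - a)"
  using mvt_very_simple[OF assms(1), of f "\<lambda>x. (*) (f' x)"] assms(2)
  by (simp add: has_field_derivative_def)

lemma deriv_nonneg_at_left_max:
  fixes f :: "real \<Rightarrow> real"
  assumes d: "(f has_real_derivative D) (at b within {a..b})" and "a < b"
    and below: "\<And>y. y \<in> {a..b} \<Longrightarrow> f y \<le> f b"
  shows "D \<ge> 0"
proof -
  have "((\<lambda>y. (f y - f b) / (y - b)) \<longlongrightarrow> D) (at_left b)"
    using d \<open>a < b\<close> by (simp add: has_field_derivative_iff at_within_Icc_at_left)
  moreover have "\<forall>\<^sub>F y in at_left b. (f y - f b) / (y - b) \<ge> 0"
    unfolding eventually_at_left[OF \<open>a < b\<close>]
    by (rule exI[of _ a]) (use assms in \<open>auto intro!: divide_nonpos_neg\<close>)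
  ultimately show ?thesis
    by (rule tendsto_lowerbound) simp
qed

lemma eq_extends_to_closed_interval:
  fixes F G :: "real \<Rightarrow> real"
  assumes "a < b" "continuous_on {a..b} F" "continuous_on {a..b} G"
    and "\<And>x. a < x \<Longrightarrow> x < b \<Longrightarrow> F x = G x" and "x \<in> {a..b}"
  shows "F x = G x"
proof -
  have "closed ({a..b} \<inter> (\<lambda>x. F x - G x) -` {0})"
    by (intro continuous_closed_preimage continuous_on_diff assms(2,3) closed_atLeastAtMost closed_singleton)
  moreover have "{a<..<b} \<subseteq> {a..b} \<inter> (\<lambda>x. F x - G x) -` {0}" using assms by auto
  ultimately have "closure {a<..<b} \<subseteq> {a..b} \<inter> (\<lambda>x. F x - G x) -` {0}"
    by (rule closure_minimal[rotated])
  thus ?thesis using assms by auto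
qed

lemma continuous_on_real_bound:
  fixes g :: "real \<Rightarrow> real"
  assumes "continuous_on S g" "t \<in> S" "e > 0"
  obtains \<eta> where "\<eta> > 0" and "\<And>s. s \<in> S \<Longrightarrow> \<bar>s - t\<bar> < \<eta> \<Longrightarrow> \<bar>g s - g t\<bar> < e"
  using assms unfolding continuous_on_iff dist_real_def by metis

lemma continuous_on_slice:
  fixes X :: "real \<Rightarrow> real \<Rightarrow> real"
  assumes "continuous_on S (\<lambda>(r, t). X r t)" and "\<And>r. r \<in> A \<Longrightarrow> (r, t) \<in> S"
  shows "continuous_on A (\<lambda>r. X r t)"
  using continuous_on_compose2[OF assms(1) continuous_on_Pair[OF continuous_on_id continuous_on_const]]
    assms(2) by auto

lemma continuous_on_pointwise_bound:
  fixes X :: "real \<Rightarrow> real \<Rightarrow> real"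
  assumes "continuous_on S (\<lambda>(r, t). X r t)" "(a, t) \<in> S" "e > 0"
  obtains d where "d > 0" and "\<And>r' t'. (r', t') \<in> S \<Longrightarrow> \<bar>r' - a\<bar> < d \<Longrightarrow> \<bar>t' - t\<bar> < d \<Longrightarrow>
      \<bar>X r' t' - X a t\<bar> < e"
proof -
  obtain d where d: "d > 0" "\<And>y. y \<in> S \<Longrightarrow> dist y (a, t) < d \<Longrightarrow> \<bar>(\<lambda>(r, t). X r t) y - X a t\<bar> < e"
    using assms unfolding continuous_on_iff dist_real_def by fastforce
  show ?thesis
  proof (rule that[of "d / sqrt 2"])
    fix r' t' assume "(r', t') \<in> S" "\<bar>r' - a\<bar> < d / sqrt 2" "\<bar>t' - t\<bar> < d / sqrt 2"
    moreover from this have "dist (r', t') (a, t) < d"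
      by (simp add: dist_Pair_Pair dist_real_def real_sqrt_sum_squares_less)
    ultimately show "\<bar>X r' t' - X a t\<bar> < e" using d by auto
  qed (use d in simp)
qed

lemma positive_below_finitely_many:
  fixes D :: "real set"
  assumes "finite D" "\<And>d. d \<in> D \<Longrightarrow> 0 < d"
  obtains h where "0 < h" "\<And>d. d \<in> D \<Longrightarrow> h < d"
proof (rule that[of "Min (insert 1 D) / 2"])
  have "0 < Min (insert 1 D)" using assms by simp
  then show "0 < Min (insert 1 D) / 2" by simp
  fix d assume "d \<in> D"
  then have "Min (insert 1 D) \<le> d" using assms by simp
  with \<open>0 < Min (insert 1 D)\<close> show "Min (insert 1 D) / 2 < d" by linarith
qed

lemma nonneg_from_approximants:
  fixes Q0 P0 D0 :: real
  assumes approx: "\<And>e. e > 0 \<Longrightarrow> \<exists>Q P D. \<bar>Q - Q0\<bar> < e \<and> \<bar>P - P0\<bar> < e \<and> \<bar>D - D0\<bar> < e \<and> Q + P * D > 0"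
  shows "Q0 + P0 * D0 \<ge> 0"
proof -
  define e :: "nat \<Rightarrow> real" where "e n = inverse (real (Suc n))" for n
  have "\<forall>n. \<exists>Q P D. \<bar>Q - Q0\<bar> < e n \<and> \<bar>P - P0\<bar> < e n \<and> \<bar>D - D0\<bar> < e n \<and> Q + P * D > 0"
    using approx by (simp add: e_def)
  then obtain Q P D where QPD: "\<And>n. \<bar>Q n - Q0\<bar> < e n" "\<And>n. \<bar>P n - P0\<bar> < e n"
      "\<And>n. \<bar>D n - D0\<bar> < e n" "\<And>n. Q n + P n * D n > 0"
    by metis
  have e0: "e \<longlonglongrightarrow> 0" unfolding e_def by (rule LIMSEQ_inverse_real_of_nat)
  have conv: "X \<longlonglongrightarrow> X0" if "\<And>n. \<bar>X n - X0\<bar> < e n" for X :: "nat \<Rightarrow> real" and X0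
  proof -
    have "(\<lambda>n. X n - X0) \<longlonglongrightarrow> 0"
      by (rule Lim_null_comparison[OF _ e0]) (use that in \<open>auto intro: less_imp_le always_eventually\<close>)
    thus ?thesis by (rule LIM_zero_cancel)
  qed
  have "(\<lambda>n. Q n + P n * D n) \<longlonglongrightarrow> Q0 + P0 * D0"
    using QPD(1-3) by (intro tendsto_intros conv)
  thus ?thesis
    by (rule tendsto_lowerbound) (use QPD(4) in \<open>auto intro!: always_eventually less_imp_le\<close>)
qed

text \<open>The sign argument behind the theorem: above the capacity the logistic production is
  nonpositive and the decay negative, while a nonnegative material derivative together with a
  positive divergence makes the transport side positive.\<close>
lemma reaction_below_transport:
  fixes \<rho> \<rho>m md dv S decay :: real
  assumes "1 < \<rho>m" "\<rho>m \<le> \<rho>" "0 \<le> md" "0 < dv" "0 \<le> S" "0 < decay"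
  shows "S * (1 - \<rho> / \<rho>m) - decay * \<rho> < md + \<rho> * dv"
proof -
  have "S * (1 - \<rho> / \<rho>m) \<le> 0" using assms by (intro mult_nonneg_nonpos) auto
  moreover have "0 < decay * \<rho>" "0 < \<rho> * dv" using assms by simp_all
  ultimately show ?thesis using assms(3) by linarith
qed

lemma pres_mono: "\<beta> \<ge> 0 \<Longrightarrow> x \<le> y \<Longrightarrow> pres \<beta> x \<le> pres \<beta> y"
  by (auto simp: pres_def intro: mult_left_mono)

lemma pres_pos: "\<beta> > 0 \<Longrightarrow> x > 1 \<Longrightarrow> pres \<beta> x > 0"
  by (simp add: pres_def)

lemma continuous_on_pres: "continuous_on S g \<Longrightarrow> continuous_on S (\<lambda>x. pres \<beta> (g x))"
proof -
  have "pres \<beta> y = \<beta> * max (y - 1) 0" for y by (simp add: pres_def max_def)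
  then show "continuous_on S g \<Longrightarrow> continuous_on S (\<lambda>x. pres \<beta> (g x))"
    by (simp only:) (intro continuous_intros)
qed

text \<open>For a radially symmetric velocity solving the elliptic equation
  \<open>(1/r)(r v')' - v/r^2 = P'\<close>, i.e. \<open>(v/r + v')' = P'\<close>, the divergence
  \<open>v/r + v'\<close> differs from the pressure by a constant.\<close>
lemma divergence_minus_pressure_constant:
  fixes v vr vrr p dp :: "real \<Rightarrow> real"
  assumes "0 < a" "a < b"
    and cont: "continuous_on {a..b} v" "continuous_on {a..b} vr" "continuous_on {a..b} p"
    and v': "\<And>x. a < x \<Longrightarrow> x < b \<Longrightarrow> (v has_real_derivative vr x) (at x)"
    and vr': "\<And>x. a < x \<Longrightarrow> x < b \<Longrightarrow> (vr has_real_derivative vrr x) (at x)"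
    and p': "\<And>x. a < x \<Longrightarrow> x < b \<Longrightarrow> (p has_real_derivative dp x) (at x)"
    and ode: "\<And>x. a < x \<Longrightarrow> x < b \<Longrightarrow> (1 / x) * (vr x + x * vrr x) - v x / x\<^sup>2 = dp x"
    and "x \<in> {a..b}"
  shows "v x / x + vr x - p x = v a / a + vr a - p a"
proof -
  define g where "g y = v y / y + vr y - p y" for y
  have "(g has_real_derivative 0) (at y)" if y: "a < y" "y < b" for y
  proof -
    have "(g has_real_derivative (vr y * y - v y) / (y * y) + vrr y - dp y) (at y)"
      unfolding g_def using y \<open>0 < a\<close>
      by (auto intro!: derivative_eq_intros v' vr' p')
    moreover have "(vr y * y - v y) / (y * y) + vrr y = (1 / y) * (vr y + y * vrr y) - v y / y\<^sup>2"
      using y \<open>0 < a\<close> by (simp add: field_simps power2_eq_square)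
    ultimately show ?thesis using ode[OF y] by simp
  qed
  moreover have "continuous_on {a..b} g"
    unfolding g_def using \<open>0 < a\<close> by (intro continuous_intros cont) auto
  ultimately show ?thesis
    using DERIV_isconst2[OF \<open>a < b\<close>, of g x] \<open>x \<in> {a..b}\<close> by (simp add: g_def)
qed

text \<open>If the divergence equals the pressure plus the constant c = v(a)/a (which is the boundary
  condition v'(a) = P(a)) and v(b) = 0, then the divergence is positive where the pressure
  is maximal and positive: otherwise c < 0 and r v(r) would decrease from a^2 c < 0 to 0.\<close>
lemma divergence_positive_at_pressure_max:
  fixes v vr p :: "real \<Rightarrow> real"
  assumes "0 < a" "a < b" "continuous_on {a..b} v"
    and v': "\<And>x. a < x \<Longrightarrow> x < b \<Longrightarrow> (v has_real_derivative vr x) (at x)"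
    and div: "\<And>x. x \<in> {a..b} \<Longrightarrow> v x / x + vr x = p x + v a / a"
    and "v b = 0"
    and x0: "x0 \<in> {a..b}" "\<And>x. x \<in> {a..b} \<Longrightarrow> p x \<le> p x0" "p x0 > 0"
  shows "v x0 / x0 + vr x0 > 0"
proof (rule ccontr)
  define c where "c = v a / a"
  assume "\<not> ?thesis"
  then have "p x0 + c \<le> 0" using div[OF x0(1)] by (simp add: c_def)
  then have "c < 0" using x0(3) by simp
  define h where "h y = y * v y" for y
  have h': "(h has_real_derivative v y + vr y * y) (at y)" if "a < y" "y < b" for y
    unfolding h_def using v'[OF that] by (auto intro!: derivative_eq_intros)
  have "continuous_on {a..b} h" unfolding h_def by (intro continuous_intros assms(3))
  then have "\<exists>l z. a < z \<and> z < b \<and> (h has_real_derivative l) (at z) \<and> h b - h a = (b - a) * l"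
    by (rule MVT[OF \<open>a < b\<close>]) (use h' in \<open>auto simp: real_differentiable_def\<close>)
  then obtain z l where z: "a < z" "z < b" "(h has_real_derivative l) (at z)" "h b - h a = (b - a) * l"
    by blast
  have "l = v z + vr z * z" using DERIV_unique[OF z(3) h'[OF z(1,2)]] .
  also have "\<dots> = z * (p z + c)" using div[of z] z \<open>0 < a\<close> by (simp add: c_def field_simps)
  also have "\<dots> \<le> z * (p x0 + c)" using x0(2)[of z] z \<open>0 < a\<close> by (intro mult_left_mono) auto
  also have "\<dots> \<le> 0" using \<open>p x0 + c \<le> 0\<close> z \<open>0 < a\<close> by (simp add: mult_nonneg_nonpos)
  finally have "(b - a) * l \<le> 0" using \<open>a < b\<close> by (simp add: mult_nonneg_nonpos)
  then have "h b \<le> h a" using z(4) by linarith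
  moreover have "h a = a * (a * c)" using \<open>0 < a\<close> by (simp add: h_def c_def)
  moreover have "a * (a * c) < 0" using \<open>0 < a\<close> \<open>c < 0\<close> by (simp add: mult_pos_neg)
  moreover have "h b = 0" using \<open>v b = 0\<close> by (simp add: h_def)
  ultimately show False by linarith
qed

locale moving_domain =
  fixes L T :: real and R dR :: "real \<Rightarrow> real"
  assumes R_deriv: "\<And>t. t \<in> {0..<T} \<Longrightarrow> (R has_real_derivative dR t) (at t within {0..<T})"
    and dR_cont: "continuous_on {0..<T} dR"
    and R_bounds: "\<And>t. t \<in> {0..<T} \<Longrightarrow> 0 < R t \<and> R t < L"
begin

lemma R_cont: "continuous_on {0..<T} R"
  unfolding continuous_on_eq_continuous_within using R_deriv DERIV_continuous by blast

lemma R_increment: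
  assumes "0 \<le> \<tau>" "\<tau> \<le> t" "t < T"
  shows "\<exists>\<sigma>\<in>{\<tau>..t}. R t - R \<tau> = dR \<sigma> * (t - \<tau>)"
proof (rule mvt_real_within)
  fix x assume "x \<in> {\<tau>..t}"
  with assms show "(R has_real_derivative dR x) (at x within {\<tau>..t})"
    by (intro has_field_derivative_subset[OF R_deriv]) auto
qed (use assms in simp)

lemma first_exceedance:
  fixes X :: "real \<Rightarrow> real \<Rightarrow> real"
  assumes X_cont: "continuous_on (Omega R L T) (\<lambda>(r, t). X r t)"
    and exceeds: "(r0, t0) \<in> Omega R L T" "c \<le> X r0 t0"
  obtains r1 t1 where "(r1, t1) \<in> Omega R L T" "c \<le> X r1 t1"
    and "\<And>r s. (r, s) \<in> Omega R L T \<Longrightarrow> s < t1 \<Longrightarrow> X r s < c"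
proof -
  define B where "B = {0..L} \<times> {0..t0}"
  define C where "C = B \<inter> (\<lambda>p. R (snd p) - fst p) -` {..0}"
  define K where "K = C \<inter> (\<lambda>(r, t). X r t) -` {c..}"
  text \<open>K, the part of the domain up to time t0 where X \<ge> c, is compact and nonempty; its
    point of least time is the first exceedance.\<close>
  have t0: "0 \<le> t0" "t0 < T" using exceeds by (auto simp: Omega_iff)
  have C_Omega: "C \<subseteq> Omega R L T"
    using t0 by (auto simp: C_def B_def Omega_iff)
  have "continuous_on B (\<lambda>p. R (snd p))"
    by (rule continuous_on_compose2[OF R_cont continuous_on_snd[OF continuous_on_id]])
       (use t0 in \<open>auto simp: B_def\<close>)
  then have "closed C" unfolding C_def
    by (intro continuous_closed_preimage continuous_intros) (simp_all add: B_def closed_Times)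
  then have "closed K"
    unfolding K_def by (intro continuous_closed_preimage continuous_on_subset[OF X_cont C_Omega]) simp_all
  moreover have "K = B \<inter> K" by (auto simp: K_def C_def)
  moreover have "compact B" unfolding B_def by (intro compact_Times compact_Icc)
  ultimately have "compact K" by (metis compact_Int_closed)
  moreover have "(r0, t0) \<in> K"
    using exceeds R_bounds[of t0] t0 by (auto simp: K_def C_def B_def Omega_iff)
  ultimately obtain p where p: "p \<in> K" "\<And>q. q \<in> K \<Longrightarrow> snd p \<le> snd q"
    by (metis continuous_attains_inf continuous_on_snd continuous_on_id empty_iff)
  show ?thesis
  proof (rule that[of "fst p" "snd p"])
    show "(fst p, snd p) \<in> Omega R L T" "c \<le> X (fst p) (snd p)"
      using p(1) C_Omega by (auto simp: K_def C_def B_def)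
    fix r s assume rs: "(r, s) \<in> Omega R L T" "s < snd p"
    show "X r s < c"
    proof (rule ccontr)
      assume "\<not> X r s < c"
      with rs p(1) R_bounds[of s] have "(r, s) \<in> K" by (auto simp: K_def C_def B_def Omega_iff)
      with p(2) rs(2) show False by fastforce
    qed
  qed
qed

end

locale C1_density = moving_domain +
  fixes \<rho> \<rho>r \<rho>t :: "real \<Rightarrow> real \<Rightarrow> real"
  assumes rho_cont: "continuous_on (Omega R L T) (\<lambda>(r, t). \<rho> r t)"
    and rho_r: "\<And>r t. (r, t) \<in> Omega R L T \<Longrightarrow>
                  ((\<lambda>y. \<rho> y t) has_real_derivative \<rho>r r t) (at r within {R t..L})"
    and rho_t: "\<And>r t. (r, t) \<in> Omega R L T \<Longrightarrow>
                  ((\<lambda>s. \<rho> r s) has_real_derivative \<rho>t r t)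
                    (at t within {s. (r, s) \<in> Omega R L T})"
    and rho_r_cont: "continuous_on (Omega R L T) (\<lambda>(r, t). \<rho>r r t)"
    and rho_t_cont: "continuous_on (Omega R L T) (\<lambda>(r, t). \<rho>t r t)"
begin

lemma time_increment:
  assumes "s \<le> t" and vertical: "\<And>\<tau>. \<tau> \<in> {s..t} \<Longrightarrow> (r, \<tau>) \<in> Omega R L T"
  shows "\<exists>\<tau>\<in>{s..t}. \<rho> r t - \<rho> r s = \<rho>t r \<tau> * (t - s)"
proof (rule mvt_real_within[OF \<open>s \<le> t\<close>])
  fix x assume "x \<in> {s..t}"
  then show "((\<lambda>\<tau>. \<rho> r \<tau>) has_real_derivative \<rho>t r x) (at x within {s..t})"
    using vertical by (intro has_field_derivative_subset[OF rho_t]) auto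
qed

lemma space_increment:
  assumes "R t \<le> x" "x \<le> y" "y \<le> L" "0 \<le> t" "t < T"
  shows "\<exists>\<xi>\<in>{x..y}. \<rho> y t - \<rho> x t = \<rho>r \<xi> t * (y - x)"
proof (rule mvt_real_within[OF \<open>x \<le> y\<close>])
  fix \<xi> assume "\<xi> \<in> {x..y}"
  with assms show "((\<lambda>r. \<rho> r t) has_real_derivative \<rho>r \<xi> t) (at \<xi> within {x..y})"
    by (intro has_field_derivative_subset[OF rho_r]) (auto simp: Omega_iff)
qed

text \<open>Away from the moving boundary the point (a, s) stays in the domain for s slightly
  below t, so a value exceeding all earlier ones forces \<open>\<rho>_t \<ge> 0\<close>.\<close>
lemma time_derivative_nonneg_at_first_maximum:
  assumes "0 < t" "t < T" "R t < a" "a \<le> L"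
    and earlier: "\<And>s. (a, s) \<in> Omega R L T \<Longrightarrow> s < t \<Longrightarrow> \<rho> a s < \<rho> a t"
  shows "\<rho>t a t \<ge> 0"
proof -
  obtain \<eta> where \<eta>: "\<eta> > 0" "\<And>s. s \<in> {0..<T} \<Longrightarrow> \<bar>s - t\<bar> < \<eta> \<Longrightarrow> \<bar>R s - R t\<bar> < a - R t"
    using continuous_on_real_bound[OF R_cont, of t "a - R t"] assms by auto
  define s0 where "s0 = max 0 (t - \<eta> / 2)"
  have s0: "0 \<le> s0" "s0 < t" "t - s0 < \<eta>" using assms \<eta> by (auto simp: s0_def)
  have vertical: "(a, \<tau>) \<in> Omega R L T" if "\<tau> \<in> {s0..t}" for \<tau>
  proof -
    have "\<bar>R \<tau> - R t\<bar> < a - R t" using that s0 assms by (intro \<eta>(2)) auto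
    then show ?thesis using that s0 assms by (auto simp: Omega_iff)
  qed
  show ?thesis
  proof (rule deriv_nonneg_at_left_max[OF _ \<open>s0 < t\<close>])
    show "((\<lambda>\<tau>. \<rho> a \<tau>) has_real_derivative \<rho>t a t) (at t within {s0..t})"
      using vertical s0 by (intro has_field_derivative_subset[OF rho_t]) auto
    show "\<rho> a \<tau> \<le> \<rho> a t" if "\<tau> \<in> {s0..t}" for \<tau>
      using earlier[OF vertical[OF that]] that by (cases "\<tau> = t") auto
  qed
qed

text \<open>At the moving boundary the material derivative \<open>\<rho>_t + R' \<rho>_r\<close> is approximated
  by difference quotients along L-shaped paths inside the domain ending at (R t, t). If the
  inner boundary moves inwards (\<open>R' \<le> 0\<close>, the domain expands) the path starts at a point
  slightly to the right at an earlier time.\<close>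
lemma material_derivative_expanding_boundary:
  assumes "0 < t" "t < T" "dR t \<le> 0"
    and earlier: "\<And>x s. (x, s) \<in> Omega R L T \<Longrightarrow> s < t \<Longrightarrow> \<rho> x s < \<rho> (R t) t"
  shows "\<rho>t (R t) t + \<rho>r (R t) t * dR t \<ge> 0"
proof (rule nonneg_from_approximants)
  fix e :: real assume "e > 0"
  define a where "a = R t"
  define K where "K = e / 2 - dR t"
  have K: "K > 0" using \<open>e > 0\<close> assms by (simp add: K_def)
  have a: "0 < a" "a < L" "(a, t) \<in> Omega R L T"
    using R_bounds[of t] assms by (auto simp: a_def Omega_iff)
  obtain d1 where d1: "d1 > 0" "\<And>r' t'. (r', t') \<in> Omega R L T \<Longrightarrow> \<bar>r' - a\<bar> < d1 \<Longrightarrow>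
      \<bar>t' - t\<bar> < d1 \<Longrightarrow> \<bar>\<rho>t r' t' - \<rho>t a t\<bar> < e"
    using continuous_on_pointwise_bound[OF rho_t_cont a(3) \<open>e > 0\<close>] by metis
  obtain d2 where d2: "d2 > 0" "\<And>r'. (r', t) \<in> Omega R L T \<Longrightarrow> \<bar>r' - a\<bar> < d2 \<Longrightarrow>
      \<bar>\<rho>r r' t - \<rho>r a t\<bar> < e"
    using continuous_on_pointwise_bound[OF rho_r_cont a(3) \<open>e > 0\<close>] by (metis diff_self abs_zero)
  obtain \<eta> where \<eta>: "\<eta> > 0" "\<And>s. s \<in> {0..<T} \<Longrightarrow> \<bar>s - t\<bar> < \<eta> \<Longrightarrow> \<bar>dR s - dR t\<bar> < e / 2"
    using continuous_on_real_bound[OF dR_cont, of t "e / 2"] \<open>e > 0\<close> assms by auto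
  obtain h where "0 < h" and below: "\<And>d. d \<in> {d1, d1 / K, d2 / K, \<eta>, t, (L - a) / K} \<Longrightarrow> h < d"
    by (rule positive_below_finitely_many[of "{d1, d1 / K, d2 / K, \<eta>, t, (L - a) / K}"])
       (use d1 d2 \<eta> K a assms in auto)
  then have h: "0 < h" "h < d1" "K * h < d1" "K * h < d2" "h < \<eta>" "h < t" "K * h < L - a"
    using below[of "d1 / K"] below[of "d2 / K"] below[of "(L - a) / K"] K
    by (auto simp: pos_less_divide_eq mult.commute)
  define s where "s = t - h"
  define c where "c = a + K * h"
  text \<open>The boundary speed stays above -K near t, so on [s, t] the boundary lies left of
    c = a + K h and the vertical segment at c belongs to the domain.\<close>
  have cone: "(c, \<tau>) \<in> Omega R L T" if "\<tau> \<in> {s..t}" for \<tau>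
  proof -
    have \<tau>: "0 \<le> \<tau>" "\<tau> \<le> t" using that h by (auto simp: s_def)
    obtain \<sigma> where \<sigma>: "\<sigma> \<in> {\<tau>..t}" "R t - R \<tau> = dR \<sigma> * (t - \<tau>)"
      using R_increment[OF \<tau> \<open>t < T\<close>] by blast
    have "\<bar>dR \<sigma> - dR t\<bar> < e / 2" using \<sigma> that h assms by (intro \<eta>(2)) (auto simp: s_def)
    then have "- dR \<sigma> \<le> K" unfolding K_def by linarith
    then have "- dR \<sigma> * (t - \<tau>) \<le> K * (t - \<tau>)" using \<tau> by (intro mult_right_mono) auto
    also have "\<dots> \<le> K * h" using K that by (intro mult_left_mono) (auto simp: s_def)
    finally have "R \<tau> \<le> c" using \<sigma>(2) by (simp add: c_def a_def)
    then show ?thesis using \<tau> h K assms by (auto simp: c_def Omega_iff)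
  qed
  obtain \<tau>1 where \<tau>1: "\<tau>1 \<in> {s..t}" "\<rho> c t - \<rho> c s = \<rho>t c \<tau>1 * h"
    using time_increment[of s t c] cone h by (auto simp: s_def)
  obtain \<xi> where \<xi>: "\<xi> \<in> {a..c}" "\<rho> c t - \<rho> a t = \<rho>r \<xi> t * (K * h)"
    using space_increment[of t a c] h K assms by (auto simp: a_def c_def)
  have "\<rho> c s < \<rho> a t" using earlier[OF cone] h by (auto simp: s_def a_def)
  then have "0 < (\<rho>t c \<tau>1 + \<rho>r \<xi> t * (- K)) * h"
    using \<tau>1(2) \<xi>(2) by (simp add: algebra_simps)
  then have "\<rho>t c \<tau>1 + \<rho>r \<xi> t * (- K) > 0" using h by (simp add: zero_less_mult_iff)
  moreover have "\<bar>\<rho>t c \<tau>1 - \<rho>t a t\<bar> < e"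
    using \<tau>1(1) h K by (intro d1(2) cone) (auto simp: s_def c_def)
  moreover have "\<bar>\<rho>r \<xi> t - \<rho>r a t\<bar> < e"
    using \<xi>(1) h a by (intro d2(2)) (auto simp: c_def Omega_iff)
  moreover have "\<bar>- K - dR t\<bar> < e" using \<open>e > 0\<close> by (simp add: K_def)
  ultimately show "\<exists>Q P D. \<bar>Q - \<rho>t (R t) t\<bar> < e \<and> \<bar>P - \<rho>r (R t) t\<bar> < e \<and> \<bar>D - dR t\<bar> < e \<and> Q + P * D > 0"
    unfolding a_def by blast
qed

text \<open>If the inner boundary moves outwards (\<open>R' > 0\<close>, the domain shrinks) the path
  starts at the boundary point (R s, s) at an earlier time s.\<close>
lemma material_derivative_shrinking_boundary:
  assumes "0 < t" "t < T" "dR t > 0"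
    and earlier: "\<And>x s. (x, s) \<in> Omega R L T \<Longrightarrow> s < t \<Longrightarrow> \<rho> x s < \<rho> (R t) t"
  shows "\<rho>t (R t) t + \<rho>r (R t) t * dR t \<ge> 0"
proof (rule nonneg_from_approximants)
  fix e :: real assume "e > 0"
  define a where "a = R t"
  have a: "0 < a" "a < L" "(a, t) \<in> Omega R L T"
    using R_bounds[of t] assms by (auto simp: a_def Omega_iff)
  obtain d1 where d1: "d1 > 0" "\<And>r' t'. (r', t') \<in> Omega R L T \<Longrightarrow> \<bar>r' - a\<bar> < d1 \<Longrightarrow>
      \<bar>t' - t\<bar> < d1 \<Longrightarrow> \<bar>\<rho>t r' t' - \<rho>t a t\<bar> < e"
    using continuous_on_pointwise_bound[OF rho_t_cont a(3) \<open>e > 0\<close>] by metis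
  obtain d2 where d2: "d2 > 0" "\<And>r' t'. (r', t') \<in> Omega R L T \<Longrightarrow> \<bar>r' - a\<bar> < d2 \<Longrightarrow>
      \<bar>t' - t\<bar> < d2 \<Longrightarrow> \<bar>\<rho>r r' t' - \<rho>r a t\<bar> < e"
    using continuous_on_pointwise_bound[OF rho_r_cont a(3) \<open>e > 0\<close>] by metis
  obtain \<eta>1 where \<eta>1: "\<eta>1 > 0"
    "\<And>s. s \<in> {0..<T} \<Longrightarrow> \<bar>s - t\<bar> < \<eta>1 \<Longrightarrow> \<bar>dR s - dR t\<bar> < min e (dR t)"
    using continuous_on_real_bound[OF dR_cont, of t "min e (dR t)"] \<open>e > 0\<close> assms by auto
  obtain \<eta>2 where \<eta>2: "\<eta>2 > 0" "\<And>s. s \<in> {0..<T} \<Longrightarrow> \<bar>s - t\<bar> < \<eta>2 \<Longrightarrow> \<bar>R s - a\<bar> < d2"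
    using continuous_on_real_bound[OF R_cont, of t d2] d2(1) assms by (auto simp: a_def)
  obtain h where "0 < h" and below: "\<And>d. d \<in> {d1, d2, \<eta>1, \<eta>2, t} \<Longrightarrow> h < d"
    by (rule positive_below_finitely_many[of "{d1, d2, \<eta>1, \<eta>2, t}"]) (use d1 d2 \<eta>1 \<eta>2 assms in auto)
  then have h: "0 < h" "h < d1" "h < d2" "h < \<eta>1" "h < \<eta>2" "h < t" by auto
  define s where "s = t - h"
  have s: "0 \<le> s" "s < t" "s \<in> {0..<T}" using h assms by (auto simp: s_def)
  have speed: "\<bar>dR \<sigma> - dR t\<bar> < min e (dR t)" if "\<sigma> \<in> {s..t}" for \<sigma>
    using that h assms by (intro \<eta>1(2)) (auto simp: s_def)
  text \<open>The boundary moves outwards near t, so the vertical segment at a = R t belongs to the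
    domain on [s, t].\<close>
  have vertical: "(a, \<tau>) \<in> Omega R L T" if "\<tau> \<in> {s..t}" for \<tau>
  proof -
    have \<tau>: "0 \<le> \<tau>" "\<tau> \<le> t" using that s by auto
    obtain \<sigma> where \<sigma>: "\<sigma> \<in> {\<tau>..t}" "R t - R \<tau> = dR \<sigma> * (t - \<tau>)"
      using R_increment[OF \<tau> \<open>t < T\<close>] by blast
    have "dR \<sigma> \<ge> 0" using speed[of \<sigma>] \<sigma>(1) that by auto
    then have "0 \<le> dR \<sigma> * (t - \<tau>)" using \<tau> by simp
    then have "R \<tau> \<le> a" using \<sigma>(2) by (simp add: a_def)
    then show ?thesis using \<tau> a assms by (auto simp: Omega_iff)
  qed
  obtain \<tau>1 where \<tau>1: "\<tau>1 \<in> {s..t}" "\<rho> a t - \<rho> a s = \<rho>t a \<tau>1 * h"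
    using time_increment[of s t a] vertical s by (auto simp: s_def)
  have "R s \<le> a" using vertical[of s] s by (auto simp: Omega_iff)
  then obtain \<xi> where \<xi>: "\<xi> \<in> {R s..a}" "\<rho> a s - \<rho> (R s) s = \<rho>r \<xi> s * (a - R s)"
    using space_increment[of s "R s" a] a s by auto
  obtain \<sigma> where \<sigma>: "\<sigma> \<in> {s..t}" "a - R s = dR \<sigma> * h"
    using R_increment[of s t] s assms by (auto simp: a_def s_def)
  have "\<rho> (R s) s < \<rho> a t"
    using earlier[of "R s" s] s R_bounds[of s] by (auto simp: a_def Omega_iff)
  then have "0 < (\<rho>t a \<tau>1 + \<rho>r \<xi> s * dR \<sigma>) * h"
    using \<tau>1(2) \<xi>(2) \<sigma>(2) by (simp add: algebra_simps)
  then have "\<rho>t a \<tau>1 + \<rho>r \<xi> s * dR \<sigma> > 0" using h by (simp add: zero_less_mult_iff)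
  moreover have "\<bar>\<rho>t a \<tau>1 - \<rho>t a t\<bar> < e"
    using \<tau>1(1) h by (intro d1(2) vertical) (auto simp: s_def)
  moreover have "\<bar>\<rho>r \<xi> s - \<rho>r a t\<bar> < e"
  proof (rule d2(2))
    show "(\<xi>, s) \<in> Omega R L T" using \<xi>(1) a s by (auto simp: Omega_iff)
    have "\<bar>R s - a\<bar> < d2" using s h by (intro \<eta>2(2)) (auto simp: s_def)
    then show "\<bar>\<xi> - a\<bar> < d2" using \<xi>(1) by auto
    show "\<bar>s - t\<bar> < d2" using h by (simp add: s_def)
  qed
  moreover have "\<bar>dR \<sigma> - dR t\<bar> < e" using speed[OF \<sigma>(1)] by simp
  ultimately show "\<exists>Q P D. \<bar>Q - \<rho>t (R t) t\<bar> < e \<and> \<bar>P - \<rho>r (R t) t\<bar> < e \<and> \<bar>D - dR t\<bar> < e \<and> Q + P * D > 0"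
    unfolding a_def by blast
qed

lemma material_derivative_at_boundary:
  assumes "0 < t" "t < T"
    and "\<And>x s. (x, s) \<in> Omega R L T \<Longrightarrow> s < t \<Longrightarrow> \<rho> x s < \<rho> (R t) t"
  shows "\<rho>t (R t) t + \<rho>r (R t) t * dR t \<ge> 0"
  using material_derivative_expanding_boundary material_derivative_shrinking_boundary assms
  by (cases "dR t \<le> 0") auto

end

locale velocity_field = C1_density +
  fixes \<beta> :: real and v vr vrr Pr :: "real \<Rightarrow> real \<Rightarrow> real"
  assumes beta_pos: "\<beta> > 0"
    and v_cont: "continuous_on (Omega R L T) (\<lambda>(r, t). v r t)"
    and v_r: "\<And>r t. (r, t) \<in> Omega R L T \<Longrightarrow>
                  ((\<lambda>y. v y t) has_real_derivative vr r t) (at r within {R t..L})"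
    and v_rr: "\<And>r t. (r, t) \<in> Omega R L T \<Longrightarrow>
                  ((\<lambda>y. vr y t) has_real_derivative vrr r t) (at r within {R t..L})"
    and v_r_cont: "continuous_on (Omega R L T) (\<lambda>(r, t). vr r t)"
    and P_r: "\<And>r t. t \<in> {0..<T} \<Longrightarrow> R t < r \<Longrightarrow> r < L \<Longrightarrow>
                  ((\<lambda>y. pres \<beta> (\<rho> y t)) has_real_derivative Pr r t) (at r)"
    and v_eq: "\<And>r t. t \<in> {0..<T} \<Longrightarrow> R t < r \<Longrightarrow> r < L \<Longrightarrow>
                  (1 / r) * (vr r t + r * vrr r t) - v r t / r\<^sup>2 = Pr r t"
    and v_L: "\<And>t. t \<in> {0..<T} \<Longrightarrow> v L t = 0"
    and v_R: "\<And>t. t \<in> {0..<T} \<Longrightarrow> vr (R t) t = pres \<beta> (\<rho> (R t) t)"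
    and free_bdry: "\<And>t. t \<in> {0..<T} \<Longrightarrow> dR t = v (R t) t"
begin

lemma divergence_positive_at_density_max:
  assumes t: "t \<in> {0..<T}" and rs: "rs \<in> {R t..L}"
    and max: "\<And>r. r \<in> {R t..L} \<Longrightarrow> \<rho> r t \<le> \<rho> rs t" and "\<rho> rs t > 1"
  shows "v rs t / rs + vr rs t > 0"
proof -
  have a: "0 < R t" "R t < L" using R_bounds[OF t] by auto
  have slice: "(r, t) \<in> Omega R L T" if "r \<in> {R t..L}" for r
    using that t by (auto simp: Omega_iff)
  have v': "((\<lambda>y. v y t) has_real_derivative vr r t) (at r)"
    and vr': "((\<lambda>y. vr y t) has_real_derivative vrr r t) (at r)" if "R t < r" "r < L" for r
  proof -
    have "(r, t) \<in> Omega R L T" using that by (intro slice) auto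
    then show "((\<lambda>y. v y t) has_real_derivative vr r t) (at r)"
      "((\<lambda>y. vr y t) has_real_derivative vrr r t) (at r)"
      using v_r v_rr at_within_Icc_at[OF that] by metis+
  qed
  have cont: "continuous_on {R t..L} (\<lambda>r. v r t)" "continuous_on {R t..L} (\<lambda>r. vr r t)"
      "continuous_on {R t..L} (\<lambda>r. pres \<beta> (\<rho> r t))"
    by (intro continuous_on_slice[OF v_cont] continuous_on_slice[OF v_r_cont]
          continuous_on_pres continuous_on_slice[OF rho_cont] slice; assumption)+
  have "v r t / r + vr r t = pres \<beta> (\<rho> r t) + v (R t) t / R t" if "r \<in> {R t..L}" for r
    using divergence_minus_pressure_constant[OF a cont v' vr' P_r[OF t] v_eq[OF t] that] v_R[OF t]
    by linarith
  then show ?thesis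
    using a cont(1) v' v_L[OF t] rs max \<open>\<rho> rs t > 1\<close> beta_pos
    by (intro divergence_positive_at_pressure_max[where p = "\<lambda>r. pres \<beta> (\<rho> r t)"])
       (auto intro: pres_mono pres_pos)
qed

text \<open>At a maximum point of the density at a time when this maximum exceeds all earlier values,
  the material derivative \<open>\<rho>_t + v \<rho>_r\<close> is nonnegative: at the moving boundary the material
  derivative is the derivative along the boundary, at an interior maximum \<open>\<rho>_r = 0\<close>, and at
  the fixed outer boundary \<open>v = 0\<close>.\<close>
lemma material_derivative_at_first_maximum:
  assumes "0 < t" "t < T" and rs: "rs \<in> {R t..L}"
    and max: "\<And>r. r \<in> {R t..L} \<Longrightarrow> \<rho> r t \<le> \<rho> rs t"
    and earlier: "\<And>x s. (x, s) \<in> Omega R L T \<Longrightarrow> s < t \<Longrightarrow> \<rho> x s < \<rho> rs t"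
  shows "\<rho>t rs t + v rs t * \<rho>r rs t \<ge> 0"
proof (cases "rs = R t")
  case True
  then show ?thesis
    using material_derivative_at_boundary[of t] free_bdry[of t] assms by (simp add: mult.commute)
next
  case False
  then have "R t < rs" using rs by simp
  have "\<rho>t rs t \<ge> 0"
    using time_derivative_nonneg_at_first_maximum[OF assms(1,2) \<open>R t < rs\<close>] rs earlier by auto
  moreover have "v rs t * \<rho>r rs t = 0"
  proof (cases "rs = L")
    case True
    then show ?thesis using v_L assms by simp
  next
    case False
    then have interior: "R t < rs" "rs < L" using \<open>R t < rs\<close> rs by auto
    have "((\<lambda>y. \<rho> y t) has_real_derivative \<rho>r rs t) (at rs)"
      using rho_r[of rs t] interior assms by (simp add: Omega_iff at_within_Icc_at)
    then have "\<rho>r rs t = 0"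
      by (rule DERIV_local_max[of _ _ _ "min (rs - R t) (L - rs)"]) (use interior in \<open>auto simp: abs_less_iff intro!: max\<close>)
    then show ?thesis by simp
  qed
  ultimately show ?thesis by linarith
qed

end

locale density_balance = velocity_field +
  fixes k\<rho> Kw\<rho> lam\<rho> \<rho>m :: real and w f :: "real \<Rightarrow> real \<Rightarrow> real"
  assumes params: "k\<rho> > 0" "Kw\<rho> > 0" "lam\<rho> > 0" "\<rho>m > 1"
    and w_cont: "continuous_on (Omega R L T) (\<lambda>(r, t). w r t)"
    and f_cont: "continuous_on (Omega R L T) (\<lambda>(r, t). f r t)"
    and w_nonneg: "\<And>r t. (r, t) \<in> Omega R L T \<Longrightarrow> w r t \<ge> 0"
    and f_nonneg: "\<And>r t. (r, t) \<in> Omega R L T \<Longrightarrow> f r t \<ge> 0"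
    and rho_eq: "\<And>r t. 0 < t \<Longrightarrow> t < T \<Longrightarrow> R t < r \<Longrightarrow> r < L \<Longrightarrow>
                  \<rho>t r t + (1 / r) * (\<rho> r t * v r t + r * (\<rho>r r t * v r t + \<rho> r t * vr r t))
                  = k\<rho> * w r t / (w r t + Kw\<rho>) * f r t * (1 - \<rho> r t / \<rho>m) - lam\<rho> * \<rho> r t"
begin

text \<open>The density cannot attain a spatial maximum at or above the capacity at a time when this
  maximum exceeds all earlier values: there the transport side of the (continuously extended)
  density equation is positive while the reaction side is negative.\<close>
lemma no_new_maximum_above_capacity:
  assumes t: "0 < t" "t < T" and rs: "rs \<in> {R t..L}"
    and max: "\<And>r. r \<in> {R t..L} \<Longrightarrow> \<rho> r t \<le> \<rho> rs t" and M: "\<rho>m \<le> \<rho> rs t"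
    and earlier: "\<And>x s. (x, s) \<in> Omega R L T \<Longrightarrow> s < t \<Longrightarrow> \<rho> x s < \<rho> rs t"
  shows False
proof -
  have t': "t \<in> {0..<T}" and a: "R t < L" "0 < R t" using t R_bounds[of t] by auto
  have slice: "(r, t) \<in> Omega R L T" if "r \<in> {R t..L}" for r
    using that t by (simp add: Omega_iff)
  have mat: "0 \<le> \<rho>t rs t + v rs t * \<rho>r rs t"
    by (rule material_derivative_at_first_maximum[OF t rs max earlier])
  have "1 < \<rho> rs t" using M params(4) by linarith
  with max have div: "0 < v rs t / rs + vr rs t"
    by (rule divergence_positive_at_density_max[OF t' rs])
  define F where "F r = \<rho>t r t + (1 / r) * (\<rho> r t * v r t + r * (\<rho>r r t * v r t + \<rho> r t * vr r t))" for r
  define S where "S r = k\<rho> * w r t / (w r t + Kw\<rho>) * f r t" for r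
  define G where "G r = S r * (1 - \<rho> r t / \<rho>m) - lam\<rho> * \<rho> r t" for r
  have "F rs = G rs"
  proof (rule eq_extends_to_closed_interval[OF a(1) _ _ _ rs])
    show "\<And>r. R t < r \<Longrightarrow> r < L \<Longrightarrow> F r = G r"
      using rho_eq t by (simp add: F_def G_def S_def)
    show "continuous_on {R t..L} F" "continuous_on {R t..L} G"
      unfolding F_def G_def S_def using a w_nonneg[OF slice] params
      by (intro continuous_intros continuous_on_slice[OF _ slice] rho_cont rho_r_cont rho_t_cont
            v_cont v_r_cont w_cont f_cont; force)+
  qed
  moreover have "F rs = (\<rho>t rs t + v rs t * \<rho>r rs t) + \<rho> rs t * (v rs t / rs + vr rs t)"
    using rs a by (simp add: F_def field_simps)
  moreover have "0 \<le> S rs"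
    using params w_nonneg[OF slice[OF rs]] f_nonneg[OF slice[OF rs]] by (simp add: S_def)
  then have "G rs < (\<rho>t rs t + v rs t * \<rho>r rs t) + \<rho> rs t * (v rs t / rs + vr rs t)"
    unfolding G_def by (rule reaction_below_transport[OF params(4) M mat div _ params(3)])
  ultimately show False by linarith
qed

end

theorem lemma4p3:
  fixes L R0 \<beta> T k\<rho> Kw\<rho> lam\<rho> \<rho>m :: real
    and R dR :: "real \<Rightarrow> real"
    and \<rho> \<rho>r \<rho>t v vr vrr Pr w f :: "real \<Rightarrow> real \<Rightarrow> real"
  assumes L: "L > 0" and R0: "0 < R0" "R0 < L" and \<beta>: "\<beta> > 0" and T: "T > 0"
    \<comment> \<open>R is C^1 on [0,T), R(0)=R0, 0 < R(t) < L\<close>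
    and R_deriv: "\<And>t. t \<in> {0..<T} \<Longrightarrow> (R has_real_derivative dR t) (at t within {0..<T})"
    and dR_cont: "continuous_on {0..<T} dR"
    and R_init: "R 0 = R0"
    and R_bounds: "\<And>t. t \<in> {0..<T} \<Longrightarrow> 0 < R t \<and> R t < L"
    \<comment> \<open>rho is a nonnegative C^1 function on Omega_T (continuous partial derivatives)\<close>
    and rho_cont: "continuous_on (Omega R L T) (\<lambda>(r, t). \<rho> r t)"
    and rho_r: "\<And>r t. (r, t) \<in> Omega R L T \<Longrightarrow>
                  ((\<lambda>y. \<rho> y t) has_real_derivative \<rho>r r t) (at r within {R t..L})"
    and rho_t: "\<And>r t. (r, t) \<in> Omega R L T \<Longrightarrow>
                  ((\<lambda>s. \<rho> r s) has_real_derivative \<rho>t r t)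
                    (at t within {s. (r, s) \<in> Omega R L T})"
    and rho_r_cont: "continuous_on (Omega R L T) (\<lambda>(r, t). \<rho>r r t)"
    and rho_t_cont: "continuous_on (Omega R L T) (\<lambda>(r, t). \<rho>t r t)"
    and rho_nonneg: "\<And>r t. (r, t) \<in> Omega R L T \<Longrightarrow> \<rho> r t \<ge> 0"
    \<comment> \<open>v is classical on Omega_T, twice continuously differentiable in r\<close>
    and v_cont: "continuous_on (Omega R L T) (\<lambda>(r, t). v r t)"
    and v_r: "\<And>r t. (r, t) \<in> Omega R L T \<Longrightarrow>
                  ((\<lambda>y. v y t) has_real_derivative vr r t) (at r within {R t..L})"
    and v_rr: "\<And>r t. (r, t) \<in> Omega R L T \<Longrightarrow>
                  ((\<lambda>y. vr y t) has_real_derivative vrr r t) (at r within {R t..L})"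
    and v_r_cont: "continuous_on (Omega R L T) (\<lambda>(r, t). vr r t)"
    and v_rr_cont: "continuous_on (Omega R L T) (\<lambda>(r, t). vrr r t)"
    \<comment> \<open>elliptic equation for v, with d_r P = Pr\<close>
    and P_r: "\<And>r t. t \<in> {0..<T} \<Longrightarrow> R t < r \<Longrightarrow> r < L \<Longrightarrow>
                  ((\<lambda>y. pres \<beta> (\<rho> y t)) has_real_derivative Pr r t) (at r)"
    and v_eq: "\<And>r t. t \<in> {0..<T} \<Longrightarrow> R t < r \<Longrightarrow> r < L \<Longrightarrow>
                  (1 / r) * (vr r t + r * vrr r t) - v r t / r\<^sup>2 = Pr r t"
    and v_L: "\<And>t. t \<in> {0..<T} \<Longrightarrow> v L t = 0"
    and v_R: "\<And>t. t \<in> {0..<T} \<Longrightarrow> vr (R t) t = pres \<beta> (\<rho> (R t) t)"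
    and free_bdry: "\<And>t. t \<in> {0..<T} \<Longrightarrow> dR t = v (R t) t"
    \<comment> \<open>additional hypotheses of the lemma\<close>
    and params: "k\<rho> > 0" "Kw\<rho> > 0" "lam\<rho> > 0" "\<rho>m > 1"
    and w_cont: "continuous_on (Omega R L T) (\<lambda>(r, t). w r t)"
    and f_cont: "continuous_on (Omega R L T) (\<lambda>(r, t). f r t)"
    and w_nonneg: "\<And>r t. (r, t) \<in> Omega R L T \<Longrightarrow> w r t \<ge> 0"
    and f_nonneg: "\<And>r t. (r, t) \<in> Omega R L T \<Longrightarrow> f r t \<ge> 0"
    and rho_eq: "\<And>r t. 0 < t \<Longrightarrow> t < T \<Longrightarrow> R t < r \<Longrightarrow> r < L \<Longrightarrow>
                  \<rho>t r t + (1 / r) * (\<rho> r t * v r t + r * (\<rho>r r t * v r t + \<rho> r t * vr r t))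
                  = k\<rho> * w r t / (w r t + Kw\<rho>) * f r t * (1 - \<rho> r t / \<rho>m) - lam\<rho> * \<rho> r t"
    and rho_init: "\<And>r. R0 \<le> r \<Longrightarrow> r \<le> L \<Longrightarrow> \<rho> r 0 < \<rho>m"
  shows "\<forall>(r, t) \<in> Omega R L T. \<rho> r t < \<rho>m"
proof (rule ccontr)
  interpret density_balance L T R dR \<rho> \<rho>r \<rho>t \<beta> v vr vrr Pr k\<rho> Kw\<rho> lam\<rho> \<rho>m w f
    by unfold_locales (fact assms)+
  assume "\<not> ?thesis"
  then obtain r0 t0 where "(r0, t0) \<in> Omega R L T" "\<rho>m \<le> \<rho> r0 t0" by (auto simp: not_less)
  then obtain r1 t1 where first: "(r1, t1) \<in> Omega R L T" "\<rho>m \<le> \<rho> r1 t1"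
    and below: "\<And>r s. (r, s) \<in> Omega R L T \<Longrightarrow> s < t1 \<Longrightarrow> \<rho> r s < \<rho>m"
    by (rule first_exceedance[OF rho_cont]) blast+
  have "t1 \<noteq> 0" using first rho_init[of r1] R_init by (auto simp: Omega_iff)
  then have t1: "0 < t1" "t1 < T" using first by (auto simp: Omega_iff)
  have "\<exists>rs\<in>{R t1..L}. \<forall>r\<in>{R t1..L}. \<rho> r t1 \<le> \<rho> rs t1"
    using R_bounds[of t1] t1
    by (intro continuous_attains_sup continuous_on_slice[OF rho_cont]) (auto simp: Omega_iff)
  then obtain rs where rs: "rs \<in> {R t1..L}" and max: "\<And>r. r \<in> {R t1..L} \<Longrightarrow> \<rho> r t1 \<le> \<rho> rs t1"
    by blast
  have M: "\<rho>m \<le> \<rho> rs t1" using max[of r1] first by (simp add: Omega_iff)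
  have earlier: "\<rho> x s < \<rho> rs t1" if "(x, s) \<in> Omega R L T" "s < t1" for x s
    using below[OF that] M by linarith
  show False using t1 rs max M earlier by (rule no_new_maximum_above_capacity)
qed

end
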